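(* Let $m,N\ge1$, let $d$ be a positive divisor of $m$, and let $\chi$ be a Dirichlet character modulo $N$ with conductor $N_\chi$. Define $$\Sigma(N,m,d) = \sum_{\tau}\phi(\gcd(\tau,N/\tau))\,\chi(y_\tau),$$ where $\tau$ runs over positive divisors of $N$ such that $\gcd(\tau,N/\tau)$ divides $\gcd(N/N_\chi,\, d-m/d)$, and $y_\tau$ is an integer (unique modulo $\mathrm{lcm}(\tau,N/\tau)$) with $y_\tau\equiv d \pmod{\tau}$ and $y_\tau\equiv m/d\pmod{N/\tau}$. Then $|\Sigma(N,m,d)|\le \sqrt{N}\,2^{\omega(N)}$ always, and if $d\ne\sqrt m$ then $|\Sigma(N,m,d)|\le |d-m/d|\,2^{\omega(N)}$.
   Context: $\phi$ is Euler's totient function; $\omega(N)$ is the number of distinct prime divisors of $N$; $\gcd(a,0)=a$. *)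

theory Defs
  imports Complex_Main "HOL-Number_Theory.Number_Theory"
begin

definition dirichlet_character :: "nat \<Rightarrow> (int \<Rightarrow> complex) \<Rightarrow> bool" where
  "dirichlet_character N \<chi> \<longleftrightarrow> N \<ge> 1 \<and>
     (\<forall>a b. \<chi> (a * b) = \<chi> a * \<chi> b) \<and>
     (\<forall>a. \<chi> (a + int N) = \<chi> a) \<and>
     (\<forall>a. \<chi> a = 0 \<longleftrightarrow> \<not> coprime a (int N))"

definition induced_modulus :: "nat \<Rightarrow> (int \<Rightarrow> complex) \<Rightarrow> nat \<Rightarrow> bool" where
  "induced_modulus N \<chi> q \<longleftrightarrow> q > 0 \<and> q dvd N \<and>
     (\<forall>a. coprime a (int N) \<and> [a = 1] (mod int q) \<longrightarrow> \<chi> a = 1)"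

definition conductor :: "nat \<Rightarrow> (int \<Rightarrow> complex) \<Rightarrow> nat" where
  "conductor N \<chi> = (LEAST q. induced_modulus N \<chi> q)"

definition omega :: "nat \<Rightarrow> nat" where
  "omega n = card (prime_factors n)"

definition sigma_index :: "nat \<Rightarrow> (int \<Rightarrow> complex) \<Rightarrow> nat \<Rightarrow> nat \<Rightarrow> nat set" where
  "sigma_index N \<chi> m d = {\<tau>. \<tau> > 0 \<and> \<tau> dvd N \<and>
      int (gcd \<tau> (N div \<tau>)) dvd gcd (int (N div conductor N \<chi>)) (int d - int (m div d))}"

end

theory Submission
  imports Defs
begin

text \<open>Only \<open>|\<chi>| \<le> 1\<close> is used about the values \<open>\<chi>(y \<tau>)\<close>. The triangle inequality bounds \<open>|\<Sigma>|\<close> by \<open>\<Sum> \<phi>(g \<tau>)\<close> with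
  \<open>g \<tau> = gcd(\<tau>, N/\<tau>)\<close>. A divisor \<open>\<tau>\<close> of \<open>N\<close> with given \<open>g \<tau>\<close> is determined by the set of primes
  at which it takes the larger part of the exponent of \<open>N\<close>, so each value of \<open>g\<close> occurs at most
  \<open>2^\<omega>(N)\<close> times. If all values of \<open>g\<close> divide a common \<open>B > 0\<close>, then \<open>\<Sum>\<^bsub>e | B\<^esub> \<phi>(e) = B\<close>
  bounds the sum by \<open>2^\<omega>(N) B\<close>. Both \<open>B = |d - m/d|\<close> and \<open>B = r\<close>, where \<open>r\<^sup>2\<close> is the largest
  square dividing \<open>N\<close>, qualify, since \<open>g(\<tau>)\<^sup>2\<close> divides \<open>N\<close>.\<close>

lemma dirichlet_character_add_mult:
  assumes "dirichlet_character N \<chi>"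
  shows "\<chi> (a + k * int N) = \<chi> a"
proof -
  have shift: "\<chi> (b + int n * int N) = \<chi> b" for n b
  proof (induction n)
    case (Suc n)
    have "\<chi> (b + int (Suc n) * int N) = \<chi> ((b + int n * int N) + int N)"
      by (simp add: algebra_simps)
    also have "\<dots> = \<chi> b"
      using assms Suc.IH unfolding dirichlet_character_def by simp
    finally show ?case .
  qed simp
  show ?thesis
  proof (cases "k \<ge> 0")
    case True
    then show ?thesis using shift[of a "nat k"] by simp
  next
    case False
    then show ?thesis using shift[of "a + k * int N" "nat (- k)"] by simp
  qed
qed

lemma dirichlet_character_cong:
  assumes "dirichlet_character N \<chi>" and "[a = b] (mod int N)"
  shows "\<chi> a = \<chi> b"
proof -
  obtain k where "b = a + int N * k" using assms(2) by (auto simp: cong_iff_lin)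
  then show ?thesis using dirichlet_character_add_mult[OF assms(1), of a k] by (simp add: mult.commute)
qed

lemma dirichlet_character_one:
  assumes "dirichlet_character N \<chi>"
  shows "\<chi> 1 = 1"
proof -
  have "\<chi> 1 = \<chi> 1 * \<chi> 1" "\<chi> 1 \<noteq> 0"
    using assms unfolding dirichlet_character_def by (metis mult_1, simp)
  then show ?thesis by simp
qed

lemma dirichlet_character_power:
  assumes "dirichlet_character N \<chi>"
  shows "\<chi> (a ^ n) = \<chi> a ^ n"
  using assms dirichlet_character_one[OF assms]
  by (induction n) (simp_all add: dirichlet_character_def)

lemma norm_dirichlet_character_le_1:
  assumes "dirichlet_character N \<chi>"
  shows "cmod (\<chi> a) \<le> 1"
proof (cases "coprime a (int N)")
  case False
  then have "\<chi> a = 0" using assms unfolding dirichlet_character_def by blast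
  then show ?thesis by simp
next
  case True
  have N: "N \<ge> 1" using assms unfolding dirichlet_character_def by blast
  define b where "b = nat (a mod int N)"
  have ab: "[a = int b] (mod int N)" using N by (simp add: b_def cong_def)
  then have "coprime (int b) (int N)" using True by (rule cong_imp_coprime)
  then have "[b ^ totient N = 1] (mod N)" by (intro euler_theorem) simp
  then have "[int b ^ totient N = 1] (mod int N)" by (simp flip: cong_int_iff)
  then have a_pow: "[a ^ totient N = 1] (mod int N)" using ab cong_pow cong_trans by blast
  have "\<chi> a ^ totient N = \<chi> (a ^ totient N)" by (simp add: dirichlet_character_power[OF assms])
  also have "\<dots> = \<chi> 1" using a_pow by (rule dirichlet_character_cong[OF assms])
  also have "\<dots> = 1" by (rule dirichlet_character_one[OF assms])
  finally have "\<chi> a ^ totient N = 1" .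
  moreover have "totient N \<noteq> 0" using N by simp
  ultimately show ?thesis by (auto dest: power_eq_1_iff)
qed

text \<open>A divisor \<open>\<tau>\<close> with \<open>gcd \<tau> (N div \<tau>) = e\<close> has, at each prime, either the exponent of \<open>e\<close>
  or its complement in \<open>N\<close>; so it is determined by the set of primes where the latter occurs.\<close>

lemma card_divisors_gcd_cofactor_eq_le:
  fixes N e :: nat
  assumes "N > 0"
  shows "card {\<tau>. \<tau> dvd N \<and> gcd \<tau> (N div \<tau>) = e} \<le> 2 ^ omega N"
proof -
  define A where "A = {\<tau>. \<tau> dvd N \<and> gcd \<tau> (N div \<tau>) = e}"
  define f where "f \<tau> = {p \<in> prime_factors N. multiplicity p (N div \<tau>) < multiplicity p \<tau>}" for \<tau>
  have multiplicity_eq: "multiplicity p \<tau> =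
      (if p \<in> f \<tau> then multiplicity p N - multiplicity p e else multiplicity p e)"
    if "\<tau> \<in> A" and p: "prime p" for \<tau> p
  proof -
    define \<sigma> where "\<sigma> = N div \<tau>"
    have "\<tau> dvd N" and g: "gcd \<tau> \<sigma> = e" using that(1) unfolding A_def \<sigma>_def by auto
    then have N_eq: "N = \<tau> * \<sigma>" unfolding \<sigma>_def by simp
    then have \<tau>\<sigma>: "\<tau> \<noteq> 0" "\<sigma> \<noteq> 0" using assms by auto
    have N_mult: "multiplicity p N = multiplicity p \<tau> + multiplicity p \<sigma>"
      using N_eq prime_elem_multiplicity_mult_distrib[of p \<tau> \<sigma>] p \<tau>\<sigma> by simp
    have e_mult: "multiplicity p e = min (multiplicity p \<tau>) (multiplicity p \<sigma>)"
      using multiplicity_gcd[OF \<tau>\<sigma> p] g by simp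
    have "p \<in> prime_factors N" if "multiplicity p \<sigma> < multiplicity p \<tau>"
    proof -
      have "multiplicity p N \<noteq> 0" using that N_mult by simp
      then have "p dvd N" using not_dvd_imp_multiplicity_0[of p N] by auto
      then show ?thesis using p assms by (simp add: in_prime_factors_iff)
    qed
    moreover have "p \<in> f \<tau> \<longleftrightarrow> p \<in> prime_factors N \<and> multiplicity p \<sigma> < multiplicity p \<tau>"
      by (simp only: f_def \<sigma>_def mem_Collect_eq)
    ultimately have "p \<in> f \<tau> \<longleftrightarrow> multiplicity p \<sigma> < multiplicity p \<tau>" by blast
    then show ?thesis using N_mult e_mult by auto
  qed
  have "inj_on f A"
  proof (rule inj_onI)
    fix \<tau>\<^sub>1 \<tau>\<^sub>2 assume \<tau>\<^sub>1: "\<tau>\<^sub>1 \<in> A" and \<tau>\<^sub>2: "\<tau>\<^sub>2 \<in> A" and f: "f \<tau>\<^sub>1 = f \<tau>\<^sub>2"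
    have "multiplicity p \<tau>\<^sub>1 = multiplicity p \<tau>\<^sub>2" if "prime p" for p
      using multiplicity_eq[OF \<tau>\<^sub>1 that] multiplicity_eq[OF \<tau>\<^sub>2 that] f by simp
    moreover have "\<tau>\<^sub>1 \<noteq> 0" "\<tau>\<^sub>2 \<noteq> 0" using \<tau>\<^sub>1 \<tau>\<^sub>2 assms by (auto simp: A_def)
    ultimately show "\<tau>\<^sub>1 = \<tau>\<^sub>2" using multiplicity_eq_imp_eq[of \<tau>\<^sub>1 \<tau>\<^sub>2] by simp
  qed
  then have "card A = card (f ` A)" by (simp add: card_image)
  also have "\<dots> \<le> card (Pow (prime_factors N))" by (rule card_mono) (auto simp: f_def)
  also have "\<dots> = 2 ^ omega N" unfolding omega_def by (simp add: card_Pow)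
  finally show ?thesis unfolding A_def .
qed

lemma totient_gcd_cofactor_sum_le:
  fixes N B :: nat and S :: "nat set"
  assumes N: "N > 0" and S: "S \<subseteq> {\<tau>. \<tau> dvd N}" and B: "B > 0"
    and dvd_B: "\<And>\<tau>. \<tau> \<in> S \<Longrightarrow> gcd \<tau> (N div \<tau>) dvd B"
  shows "(\<Sum>\<tau>\<in>S. totient (gcd \<tau> (N div \<tau>))) \<le> 2 ^ omega N * B"
proof -
  define g where "g \<tau> = gcd \<tau> (N div \<tau>)" for \<tau>
  have fin: "finite {\<tau>. \<tau> dvd N}" using N by simp
  have "(\<Sum>\<tau>\<in>S. totient (g \<tau>)) = (\<Sum>e\<in>g ` S. \<Sum>\<tau>\<in>{\<tau> \<in> S. g \<tau> = e}. totient (g \<tau>))"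
    by (rule sum.image_gen[OF finite_subset[OF S fin]])
  also have "\<dots> = (\<Sum>e\<in>g ` S. card {\<tau> \<in> S. g \<tau> = e} * totient e)"
    by (intro sum.cong refl) simp
  also have "\<dots> \<le> (\<Sum>e\<in>g ` S. 2 ^ omega N * totient e)"
  proof (intro sum_mono mult_right_mono)
    fix e
    have "card {\<tau> \<in> S. g \<tau> = e} \<le> card {\<tau>. \<tau> dvd N \<and> g \<tau> = e}"
      using S by (intro card_mono finite_subset[OF _ fin]) auto
    then show "card {\<tau> \<in> S. g \<tau> = e} \<le> 2 ^ omega N"
      using card_divisors_gcd_cofactor_eq_le[OF N, of e] unfolding g_def by linarith
  qed simp
  also have "\<dots> \<le> 2 ^ omega N * (\<Sum>e | e dvd B. totient e)"
    unfolding sum_distrib_left[symmetric] using B dvd_B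
    by (intro mult_left_mono sum_mono2) (auto simp: g_def)
  also have "\<dots> = 2 ^ omega N * B" by (simp add: totient_divisor_sum)
  finally show ?thesis unfolding g_def .
qed

lemma norm_sum_totient_gcd_cofactor_le:
  fixes y :: "nat \<Rightarrow> int"
  assumes \<chi>: "dirichlet_character N \<chi>" and S: "S \<subseteq> {\<tau>. \<tau> dvd N}" and "B > 0"
    and "\<And>\<tau>. \<tau> \<in> S \<Longrightarrow> gcd \<tau> (N div \<tau>) dvd B"
  shows "cmod (\<Sum>\<tau>\<in>S. of_nat (totient (gcd \<tau> (N div \<tau>))) * \<chi> (y \<tau>)) \<le> 2 ^ omega N * real B"
proof -
  have N: "N > 0" using \<chi> unfolding dirichlet_character_def by simp
  have "cmod (\<Sum>\<tau>\<in>S. of_nat (totient (gcd \<tau> (N div \<tau>))) * \<chi> (y \<tau>))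
      \<le> (\<Sum>\<tau>\<in>S. real (totient (gcd \<tau> (N div \<tau>))))"
    using norm_dirichlet_character_le_1[OF \<chi>]
    by (intro norm_sum[THEN order_trans] sum_mono) (simp add: norm_mult mult_left_le)
  also have "\<dots> \<le> real (2 ^ omega N * B)"
    unfolding of_nat_sum[symmetric] of_nat_le_iff
    by (rule totient_gcd_cofactor_sum_le[OF N S assms(3-)])
  finally show ?thesis by simp
qed

lemma lcm_power2_nat: "lcm a b ^ 2 = lcm (a ^ 2) (b ^ 2)" for a b :: nat
proof (cases "gcd a b = 0")
  case False
  have "gcd a b ^ 2 * lcm a b ^ 2 = gcd a b ^ 2 * lcm (a ^ 2) (b ^ 2)"
    by (metis gcd_exp prod_gcd_lcm_nat power_mult_distrib)
  then show ?thesis using False by auto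
qed simp

text \<open>The greatest square divisor \<open>r\<^sup>2\<close> of \<open>N\<close> is a multiple of all others: for two square
  divisors \<open>e\<^sup>2\<close> and \<open>r\<^sup>2\<close>, also \<open>lcm e r\<^sup>2 = lcm e\<^sup>2 r\<^sup>2\<close> divides \<open>N\<close>.\<close>

lemma ex_square_divisor_dvd_square_divisors:
  fixes N :: nat
  assumes "N > 0"
  obtains r where "r ^ 2 dvd N" and "\<And>e. e ^ 2 dvd N \<Longrightarrow> e dvd r"
proof -
  define E where "E = {e. e ^ 2 dvd N}"
  have "E \<subseteq> {..N}"
  proof
    fix e assume "e \<in> E"
    then have "e ^ 2 \<le> N" using assms by (simp add: E_def dvd_imp_le)
    then show "e \<in> {..N}" by (simp add: power2_eq_square) (metis le_square le_trans)
  qed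
  then have fin: "finite E" by (rule finite_subset) simp
  define r where "r = Max E"
  have "1 \<in> E" by (simp add: E_def)
  then have "r \<in> E" unfolding r_def using fin by (intro Max_in) auto
  then have r: "r ^ 2 dvd N" by (simp add: E_def)
  have "e dvd r" if e: "e ^ 2 dvd N" for e
  proof -
    have "lcm e r \<in> E" using e r by (simp add: E_def lcm_power2_nat)
    then have "lcm e r \<le> r" unfolding r_def using fin by simp
    moreover have "e \<noteq> 0" "r \<noteq> 0" using e r assms by (auto simp: power2_eq_square)
    then have "r \<le> lcm e r" by (intro dvd_imp_le) (auto simp: lcm_pos_nat)
    ultimately have "lcm e r = r" by simp
    then show ?thesis by (metis dvd_lcm1)
  qed
  with r that show ?thesis by blast
qed

lemma gcd_cofactor_power2_dvd:
  fixes \<tau> N :: nat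
  assumes "\<tau> dvd N"
  shows "gcd \<tau> (N div \<tau>) ^ 2 dvd N"
proof -
  have "gcd \<tau> (N div \<tau>) * gcd \<tau> (N div \<tau>) dvd \<tau> * (N div \<tau>)" by (intro mult_dvd_mono) auto
  then show ?thesis using assms by (simp add: power2_eq_square)
qed

lemma norm_sum_totient_gcd_cofactor_le_sqrt:
  fixes y :: "nat \<Rightarrow> int"
  assumes \<chi>: "dirichlet_character N \<chi>" and S: "S \<subseteq> {\<tau>. \<tau> dvd N}"
  shows "cmod (\<Sum>\<tau>\<in>S. of_nat (totient (gcd \<tau> (N div \<tau>))) * \<chi> (y \<tau>)) \<le> 2 ^ omega N * sqrt (real N)"
proof -
  have N: "N > 0" using \<chi> unfolding dirichlet_character_def by simp
  obtain r where r: "r ^ 2 dvd N" and dvd_r: "\<And>e. e ^ 2 dvd N \<Longrightarrow> e dvd r"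
    using ex_square_divisor_dvd_square_divisors[OF N] by blast
  have "r > 0" using r N by (intro gr0I) auto
  then have "cmod (\<Sum>\<tau>\<in>S. of_nat (totient (gcd \<tau> (N div \<tau>))) * \<chi> (y \<tau>)) \<le> 2 ^ omega N * real r"
    using S by (intro norm_sum_totient_gcd_cofactor_le[OF \<chi> S] dvd_r gcd_cofactor_power2_dvd) auto
  also have "\<dots> \<le> 2 ^ omega N * sqrt (real N)"
    using r N by (intro mult_left_mono real_le_rsqrt) (simp_all flip: of_nat_power add: dvd_imp_le)
  finally show ?thesis .
qed

lemma gcd_cofactor_dvd_diff_if_mem_sigma_index:
  assumes "\<tau> \<in> sigma_index N \<chi> m d"
  shows "int (gcd \<tau> (N div \<tau>)) dvd int d - int (m div d)"
  using assms dvd_trans[OF _ gcd_dvd2] by (auto simp: sigma_index_def)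

theorem lemma3p3:
  fixes N m d :: nat and \<chi> :: "int \<Rightarrow> complex" and y :: "nat \<Rightarrow> int"
  assumes "m \<ge> 1" and "N \<ge> 1" and "d > 0" and "d dvd m"
    and "dirichlet_character N \<chi>"
    and y: "\<And>\<tau>. \<tau> \<in> sigma_index N \<chi> m d \<Longrightarrow>
              [y \<tau> = int d] (mod int \<tau>) \<and> [y \<tau> = int (m div d)] (mod int (N div \<tau>))"
  defines "\<Sigma> \<equiv> (\<Sum>\<tau>\<in>sigma_index N \<chi> m d. of_nat (totient (gcd \<tau> (N div \<tau>))) * \<chi> (y \<tau>))"
  shows "cmod \<Sigma> \<le> sqrt (real N) * 2 ^ omega N \<and>
         (real d \<noteq> sqrt (real m) \<longrightarrow>
           cmod \<Sigma> \<le> \<bar>real_of_int (int d - int (m div d))\<bar> * 2 ^ omega N)"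
proof -
  define S where "S = sigma_index N \<chi> m d"
  have S: "S \<subseteq> {\<tau>. \<tau> dvd N}" by (auto simp: S_def sigma_index_def)
  have "cmod \<Sigma> \<le> 2 ^ omega N * sqrt (real N)"
    unfolding \<Sigma>_def S_def[symmetric] using assms(5) S by (rule norm_sum_totient_gcd_cofactor_le_sqrt)
  moreover have "cmod \<Sigma> \<le> 2 ^ omega N * \<bar>real_of_int (int d - int (m div d))\<bar>"
    if "real d \<noteq> sqrt (real m)"
  proof -
    define B where "B = nat \<bar>int d - int (m div d)\<bar>"
    have "m \<noteq> d * d" using that by (auto simp: real_sqrt_mult)
    then have "B > 0" using assms(4) by (auto simp: B_def)
    moreover have "gcd \<tau> (N div \<tau>) dvd B" if "\<tau> \<in> S" for \<tau>
      using gcd_cofactor_dvd_diff_if_mem_sigma_index[of \<tau>] that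
      by (simp add: S_def B_def flip: of_nat_dvd_iff)
    ultimately have "cmod \<Sigma> \<le> 2 ^ omega N * real B"
      unfolding \<Sigma>_def S_def[symmetric] by (rule norm_sum_totient_gcd_cofactor_le[OF assms(5) S])
    then show ?thesis by (simp add: B_def)
  qed
  ultimately show ?thesis by (simp add: mult.commute)
qed

end
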